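(* Let $k\ge 1$, let $n_0,n_1,\dots,n_k$ be positive integers, $n^{*}=n_0+n_1+\cdots+n_k$, and let $\sigma_0,\dots,\sigma_k>0$. Let $h:[0,\infty)\to[0,\infty)$ be a function such that $$\prod_{i=0}^{k}\sigma_i^{-n_i}\,h\!\left(\sum_{i=0}^{k}\sigma_i^{-2}\|\mathbf{x}_i\|^{2}\right)$$ is a probability density on $\mathbb{R}^{n^{*}}$, and let $(\mathbf{x}_0',\mathbf{x}_1',\dots,\mathbf{x}_k')'$, $\mathbf{x}_i\in\mathbb{R}^{n_i}$, be a random vector with this density. Define $s_0=\|\mathbf{x}_0\|^{2}$ and $\mathbf{t}_i=s_0^{-1/2}\mathbf{x}_i$ for $i=1,\dots,k$. Then $(s_0,\mathbf{t}_1,\dots,\mathbf{t}_k)$ has the density, with respect to Lebesgue measure on $(0,\infty)\times\mathbb{R}^{n_1}\times\cdots\times\mathbb{R}^{n_k}$, $$\frac{\pi^{n_0/2}}{\Gamma[n_0/2]\prod_{i=0}^{k}\sigma_i^{n_i}}\,s_0^{n^{*}/2-1}\,h\!\left(\sigma_0^{-2}\Big(1+\sigma_0^{2}\sum_{i=1}^{k}\sigma_i^{-2}\|\mathbf{t}_i\|^{2}\Big)s_0\right).$$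
   Context: $\|\cdot\|$ denotes the Euclidean norm. The density in the hypothesis is that of a zero-mean elliptically contoured distribution on $\mathbb{R}^{n^*}$ with block-diagonal scale matrix $\mathrm{diag}(\sigma_0^2\mathbf{I}_{n_0},\dots,\sigma_k^2\mathbf{I}_{n_k})$ and generator $h$. *)

theory Defs
  imports "HOL-Probability.Probability"
begin

text \<open>A vector in R^(n_0+...+n_k) is represented as a function on the index set
  of pairs (i,j) with i \<le> k and j < n i; component (i,j) is the j-th coordinate
  of the block x_i.\<close>

definition blk_idx :: "nat \<Rightarrow> (nat \<Rightarrow> nat) \<Rightarrow> (nat \<times> nat) set" where
  "blk_idx k n = {(i, j). i \<le> k \<and> j < n i}"

definition blk_idx1 :: "nat \<Rightarrow> (nat \<Rightarrow> nat) \<Rightarrow> (nat \<times> nat) set" where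
  "blk_idx1 k n = {(i, j). 1 \<le> i \<and> i \<le> k \<and> j < n i}"

definition blk_sqnorm :: "(nat \<Rightarrow> nat) \<Rightarrow> (nat \<times> nat \<Rightarrow> real) \<Rightarrow> nat \<Rightarrow> real" where
  "blk_sqnorm n x i = (\<Sum>j<n i. (x (i, j))\<^sup>2)"

end

theory Submission
  imports Defs
begin

text \<open>
  Split x = (x_0, x') with x' = (x_1, ..., x_k) and put s = |x_0|^2. The image of Lebesgue
  measure under x_0 |-> |x_0|^2 has density pi^(n_0/2) / Gamma(n_0/2) * s^(n_0/2 - 1) on
  (0, oo), the derivative in s of the volume of the ball of radius sqrt s; and for fixed s > 0
  the substitution x' = sqrt s * t contributes the Jacobian s^((n* - n_0)/2). By Fubini the map
  x |-> (s, x' / sqrt s) therefore sends Lebesgue measure to the density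
  pi^(n_0/2) / Gamma(n_0/2) * s^(n*/2 - 1); in particular x_0 = 0, where this map forgets x',
  only happens on a null set. Elsewhere the quadratic form in the density of X equals
  sigma_0^-2 (1 + sigma_0^2 * sum_i sigma_i^-2 |t_i|^2) s, a function of the new coordinates,
  so the transformed density is the product of the two.
\<close>

section \<open>The squared norm under Lebesgue measure\<close>

lemma emeasure_distr_sum_squares_atMost:
  fixes J :: "'i set"
  assumes "finite J" "J \<noteq> {}"
  shows "emeasure (distr (PiM J (\<lambda>_. lborel)) borel (\<lambda>a. \<Sum>p\<in>J. (a p)\<^sup>2)) {..x}
           = ennreal (unit_ball_vol (card J) * max 0 x powr (card J / 2))"
proof -
  let ?P = "PiM J (\<lambda>_. lborel::real measure)"
  have distr_eq: "emeasure (distr ?P borel (\<lambda>a. \<Sum>p\<in>J. (a p)\<^sup>2)) {..x}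
      = emeasure ?P ({a. (\<Sum>p\<in>J. (a p)\<^sup>2) \<le> x} \<inter> space ?P)"
    by (subst emeasure_distr) (auto intro!: arg_cong2[where f=emeasure])
  show ?thesis
  proof (cases "x > 0")
    case True
    have "{a. (\<Sum>p\<in>J. (a p)\<^sup>2) \<le> x} = {a. sqrt (\<Sum>p\<in>J. (a p)\<^sup>2) \<le> sqrt x}"
      by (simp add: real_sqrt_le_iff)
    moreover have "sqrt x ^ card J = x powr (card J / 2)"
      using True by (simp add: powr_half_sqrt[symmetric] powr_realpow[symmetric] powr_powr)
    ultimately show ?thesis
      using emeasure_cball_aux[OF assms(1), of "sqrt x"] True by (simp add: distr_eq)
  next
    case False
    interpret product_sigma_finite "\<lambda>_. lborel::real measure" by standard
    have "{a. (\<Sum>p\<in>J. (a p)\<^sup>2) \<le> x} \<inter> space ?P \<subseteq> PiE J (\<lambda>_. {0})"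
    proof
      fix a assume a: "a \<in> {a. (\<Sum>p\<in>J. (a p)\<^sup>2) \<le> x} \<inter> space ?P"
      then have "(\<Sum>p\<in>J. (a p)\<^sup>2) = 0"
        using False by (intro antisym sum_nonneg) auto
      then show "a \<in> PiE J (\<lambda>_. {0})"
        using a assms(1) by (auto simp: space_PiM PiE_iff sum_nonneg_eq_0_iff extensional_def)
    qed
    then have "emeasure ?P ({a. (\<Sum>p\<in>J. (a p)\<^sup>2) \<le> x} \<inter> space ?P) \<le> emeasure ?P (PiE J (\<lambda>_. {0}))"
      using assms(1) by (intro emeasure_mono sets_PiM_I_finite) auto
    also have "\<dots> = 0"
      using emeasure_PiM[OF assms(1), of "\<lambda>_. {0}"] assms by (simp add: prod_zero card_gt_0_iff)
    finally show ?thesis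
      using False assms by (simp add: distr_eq card_gt_0_iff)
  qed
qed

lemma emeasure_density_powr_atMost:
  assumes "d > 0"
  shows "emeasure (density lborel (\<lambda>s. ennreal (pi powr (d / 2) / Gamma (d / 2)
            * indicator {0<..} s * s powr (d / 2 - 1)))) {..x}
         = ennreal (unit_ball_vol d * max 0 x powr (d / 2))"
proof -
  define c where "c = pi powr (d / 2) / Gamma (d / 2)"
  have c: "c \<ge> 0"
    using assms by (simp add: c_def)
  have "emeasure (density lborel (\<lambda>s. ennreal (c * indicator {0<..} s * s powr (d / 2 - 1)))) {..x}
      = \<integral>\<^sup>+s. ennreal c * ennreal (indicator {0..max 0 x} s * s powr (d / 2 - 1)) \<partial>lborel"
    using c by (subst emeasure_density) (auto intro!: nn_integral_cong
        simp: indicator_def ennreal_mult'[symmetric])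
  also have "\<dots> = ennreal c * ennreal (max 0 x powr (d / 2) / (d / 2))"
    using nn_integral_has_integral_lebesgue[OF _ has_integral_powr_from_0[of "d / 2 - 1" "max 0 x"]] assms
    by (subst nn_integral_cmult) auto
  also have "\<dots> = ennreal (unit_ball_vol d * max 0 x powr (d / 2))"
  proof -
    have Gamma_succ: "Gamma (d / 2 + 1) = d / 2 * Gamma (d / 2)"
      using assms by (subst Gamma_plus1) (auto simp: nonpos_Ints_def)
    have "Gamma (d / 2) > 0"
      using assms by simp
    then have "c * (max 0 x powr (d / 2) / (d / 2)) = unit_ball_vol d * max 0 x powr (d / 2)"
      unfolding c_def unit_ball_vol_def Gamma_succ using assms by (simp add: field_simps)
    then show ?thesis
      using c by (simp add: ennreal_mult'[symmetric])
  qed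
  finally show ?thesis
    by (simp add: c_def)
qed

lemma distr_PiM_lborel_sum_squares:
  fixes J :: "'i set"
  assumes "finite J" "J \<noteq> {}"
  shows "distr (PiM J (\<lambda>_. lborel)) borel (\<lambda>a. \<Sum>p\<in>J. (a p)\<^sup>2) =
         density lborel (\<lambda>s. ennreal (pi powr (card J / 2) / Gamma (card J / 2)
              * indicator {0<..} s * s powr (card J / 2 - 1)))"
proof (rule measure_eqI_generator_eq_countable[where E="range atMost" and \<Omega>=UNIV
      and A="range (\<lambda>n::nat. {..real n})"])
  have "real (card J) > 0"
    using assms by (simp add: card_gt_0_iff)
  note density_atMost = emeasure_density_powr_atMost[OF this]
  show "emeasure (distr (PiM J (\<lambda>_. lborel)) borel (\<lambda>a. \<Sum>p\<in>J. (a p)\<^sup>2)) X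
      = emeasure (density lborel (\<lambda>s. ennreal (pi powr (card J / 2) / Gamma (card J / 2)
              * indicator {0<..} s * s powr (card J / 2 - 1)))) X" if "X \<in> range atMost" for X
    using that density_atMost by (auto simp: emeasure_distr_sum_squares_atMost[OF assms])
  show "emeasure (distr (PiM J (\<lambda>_. lborel)) borel (\<lambda>a. \<Sum>p\<in>J. (a p)\<^sup>2)) X \<noteq> \<infinity>"
    if "X \<in> range (\<lambda>n::nat. {..real n})" for X
    using that by (auto simp: emeasure_distr_sum_squares_atMost[OF assms])
  show "\<Union> (range (\<lambda>n::nat. {..real n})) = UNIV"
    by (auto intro: real_arch_simple)
qed (auto simp: Int_stable_def borel_eq_atMost)

lemma nn_integral_PiM_lborel_sum_squares:
  fixes J :: "'i set" and G :: "real \<Rightarrow> ennreal"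
  assumes "finite J" "J \<noteq> {}" and [measurable]: "G \<in> borel_measurable borel"
  shows "(\<integral>\<^sup>+a. G (\<Sum>p\<in>J. (a p)\<^sup>2) \<partial>PiM J (\<lambda>_. lborel)) =
         \<integral>\<^sup>+s. ennreal (pi powr (card J / 2) / Gamma (card J / 2)
              * indicator {0<..} s * s powr (card J / 2 - 1)) * G s \<partial>lborel"
proof -
  have "(\<integral>\<^sup>+a. G (\<Sum>p\<in>J. (a p)\<^sup>2) \<partial>PiM J (\<lambda>_. lborel)) =
        integral\<^sup>N (distr (PiM J (\<lambda>_. lborel)) borel (\<lambda>a. \<Sum>p\<in>J. (a p)\<^sup>2)) G"
    by (rule nn_integral_distr[symmetric]) auto
  then show ?thesis
    by (simp add: distr_PiM_lborel_sum_squares[OF assms(1,2)] nn_integral_density)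
qed

section \<open>The norm-ratio change of variables\<close>

lemma nn_integral_PiM_lborel_scale:
  fixes J :: "'i set" and c :: real
  assumes "finite J" "c > 0" "H \<in> borel_measurable (PiM J (\<lambda>_. lborel))"
  shows "(\<integral>\<^sup>+x. H x \<partial>PiM J (\<lambda>_. lborel)) =
    ennreal (c ^ card J) * \<integral>\<^sup>+t. H (restrict (\<lambda>p. c * t p) J) \<partial>PiM J (\<lambda>_. lborel)"
  using assms(1,3)
proof (induction J arbitrary: H rule: finite_induct)
  case empty
  then show ?case
    by (simp add: PiM_empty nn_integral_count_space_finite)
next
  case (insert i J)
  interpret product_sigma_finite "\<lambda>_. lborel::real measure" by standard
  let ?P = "\<lambda>J. PiM J (\<lambda>_. lborel::real measure)"
  note [measurable] = insert.prems
  define F where "F x = (\<integral>\<^sup>+y. H (x(i := c * y)) \<partial>lborel)" for x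
  have [measurable]: "(\<lambda>z. H ((fst z)(i := c * snd z))) \<in> borel_measurable (?P J \<Otimes>\<^sub>M lborel)"
    by measurable
  then have F_measurable[measurable]: "F \<in> borel_measurable (?P J)"
    unfolding F_def using lborel.borel_measurable_nn_integral[of "\<lambda>x y. H (x(i := c * y))"]
    by (simp add: case_prod_beta')
  have "(\<integral>\<^sup>+x. H x \<partial>?P (insert i J)) = \<integral>\<^sup>+x. \<integral>\<^sup>+y. H (x(i := y)) \<partial>lborel \<partial>?P J"
    using insert.hyps by (intro product_nn_integral_insert) auto
  also have "\<dots> = \<integral>\<^sup>+x. ennreal c * F x \<partial>?P J"
  proof (rule nn_integral_cong)
    fix x assume "x \<in> space (?P J)"
    then have "(\<lambda>y. x(i := y)) \<in> measurable borel (?P (insert i J))"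
      using measurable_component_update[of x J "\<lambda>_. lborel" i] insert.hyps by simp
    then show "(\<integral>\<^sup>+y. H (x(i := y)) \<partial>lborel) = ennreal c * F x"
      unfolding F_def using nn_integral_real_affine[of "\<lambda>y. H (x(i := y))" c 0] assms(2) by simp
  qed
  also have "\<dots> = ennreal c * \<integral>\<^sup>+x. F x \<partial>?P J"
    by (rule nn_integral_cmult) measurable
  also have "\<dots> = ennreal c * (ennreal (c ^ card J) * \<integral>\<^sup>+x. F (restrict (\<lambda>p. c * x p) J) \<partial>?P J)"
    by (simp only: insert.IH[OF F_measurable])
  also have "(\<integral>\<^sup>+x. F (restrict (\<lambda>p. c * x p) J) \<partial>?P J)
      = \<integral>\<^sup>+x. \<integral>\<^sup>+y. H (restrict (\<lambda>p. c * (x(i := y)) p) (insert i J)) \<partial>lborel \<partial>?P J"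
    unfolding F_def using insert.hyps
    by (intro nn_integral_cong arg_cong[where f=H]) (auto simp: fun_eq_iff)
  also have "\<dots> = \<integral>\<^sup>+x. H (restrict (\<lambda>p. c * x p) (insert i J)) \<partial>?P (insert i J)"
    using insert.hyps by (intro product_nn_integral_insert[symmetric]) auto
  finally have "(\<integral>\<^sup>+x. H x \<partial>?P (insert i J)) = ennreal c * (ennreal (c ^ card J) *
      \<integral>\<^sup>+x. H (restrict (\<lambda>p. c * x p) (insert i J)) \<partial>?P (insert i J))" .
  moreover have "ennreal (c ^ card (insert i J)) = ennreal c * ennreal (c ^ card J)"
    using insert.hyps assms(2) by (simp add: ennreal_mult')
  ultimately show ?case
    by (simp only: mult.assoc)
qed

lemma nn_integral_PiM_lborel_rescale:
  fixes J :: "'i set"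
  assumes "finite J" "r > 0" and [measurable]: "F \<in> borel_measurable (PiM J (\<lambda>_. lborel))"
  shows "(\<integral>\<^sup>+b. F (restrict (\<lambda>p. r powr (-1/2) * b p) J) \<partial>PiM J (\<lambda>_. lborel))
       = ennreal (r powr (card J / 2)) * \<integral>\<^sup>+t. F t \<partial>PiM J (\<lambda>_. lborel)"
proof -
  let ?P = "PiM J (\<lambda>_. lborel::real measure)"
  have [measurable]: "(\<lambda>b. restrict (\<lambda>p. r powr (-1/2) * b p) J) \<in> measurable ?P ?P"
    by (intro measurable_restrict) auto
  have "r powr (-1/2) * sqrt r = 1"
    using assms(2) by (simp add: powr_half_sqrt[symmetric] powr_add[symmetric])
  then have cancel: "restrict (\<lambda>p. r powr (-1/2) * restrict (\<lambda>p. sqrt r * t p) J p) J = t"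
    if "t \<in> space ?P" for t
    using that by (auto simp: space_PiM PiE_def extensional_def fun_eq_iff mult.assoc[symmetric])
  have "sqrt r ^ card J = r powr (card J / 2)"
    using assms(2) by (simp add: powr_half_sqrt[symmetric] powr_realpow[symmetric] powr_powr)
  moreover have "(\<integral>\<^sup>+b. F (restrict (\<lambda>p. r powr (-1/2) * b p) J) \<partial>?P) = ennreal (sqrt r ^ card J)
      * \<integral>\<^sup>+t. F (restrict (\<lambda>p. r powr (-1/2) * restrict (\<lambda>p. sqrt r * t p) J p) J) \<partial>?P"
    using assms(1,2) by (intro nn_integral_PiM_lborel_scale) auto
  ultimately show ?thesis
    by (simp only: cancel cong: nn_integral_cong)
qed

text \<open>
  Where the J0-part of x vanishes, the second component is 0 (as 0 powr a = 0); this
  case is negligible by AE_PiM_lborel_sum_squares_pos below.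
\<close>

definition norm_ratio_map :: "'i set \<Rightarrow> 'i set \<Rightarrow> ('i \<Rightarrow> real) \<Rightarrow> real \<times> ('i \<Rightarrow> real)" where
  "norm_ratio_map J0 J1 x =
     ((\<Sum>p\<in>J0. (x p)\<^sup>2), restrict (\<lambda>p. (\<Sum>q\<in>J0. (x q)\<^sup>2) powr (-1/2) * x p) J1)"

definition norm_ratio_density :: "nat \<Rightarrow> nat \<Rightarrow> real \<times> ('i \<Rightarrow> real) \<Rightarrow> real" where
  "norm_ratio_density d0 d1 z = indicator {0<..} (fst z) * pi powr (d0 / 2) / Gamma (d0 / 2)
     * fst z powr ((d0 + d1) / 2 - 1)"

lemma norm_ratio_map_measurable[measurable]:
  assumes "J0 \<subseteq> J" "J1 \<subseteq> J"
  shows "norm_ratio_map J0 J1 \<in> measurable (PiM J (\<lambda>_. lborel)) (lborel \<Otimes>\<^sub>M PiM J1 (\<lambda>_. lborel))"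
proof -
  have [measurable]: "(\<lambda>x. x p) \<in> borel_measurable (PiM J (\<lambda>_. lborel))" if "p \<in> J0 \<union> J1" for p
    using that assms measurable_component_singleton[of p J "\<lambda>_. lborel"] by auto
  show ?thesis
    unfolding norm_ratio_map_def by (intro measurable_Pair measurable_restrict) measurable
qed

lemma norm_ratio_density_measurable[measurable]:
  "norm_ratio_density d0 d1 \<in> borel_measurable (lborel \<Otimes>\<^sub>M PiM J1 (\<lambda>_. lborel))"
  unfolding norm_ratio_density_def by measurable

lemma nn_integral_PiM_lborel_norm_ratio:
  fixes J0 J1 :: "'i set"
  assumes "finite J0" "finite J1" "J0 \<noteq> {}" "J0 \<inter> J1 = {}"
    and [measurable]: "G \<in> borel_measurable (lborel \<Otimes>\<^sub>M PiM J1 (\<lambda>_. lborel))"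
  shows "(\<integral>\<^sup>+x. G (norm_ratio_map J0 J1 x) \<partial>PiM (J0 \<union> J1) (\<lambda>_. lborel))
       = \<integral>\<^sup>+z. ennreal (norm_ratio_density (card J0) (card J1) z) * G z
           \<partial>(lborel \<Otimes>\<^sub>M PiM J1 (\<lambda>_. lborel))"
proof -
  interpret product_sigma_finite "\<lambda>_. lborel::real measure" by standard
  interpret J1: finite_product_sigma_finite "\<lambda>_. lborel::real measure" J1
    by standard fact
  let ?P = "\<lambda>J. PiM J (\<lambda>_. lborel::real measure)"
  define c0 where "c0 = pi powr (card J0 / 2) / Gamma (card J0 / 2)"
  define \<Psi> where "\<Psi> r = (\<integral>\<^sup>+b. G (r, restrict (\<lambda>p. r powr (-1/2) * b p) J1) \<partial>?P J1)" for r
  have [measurable]: "\<Psi> \<in> borel_measurable borel"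
    unfolding \<Psi>_def by measurable
  have merge: "norm_ratio_map J0 J1 (merge J0 J1 (a, b))
      = ((\<Sum>p\<in>J0. (a p)\<^sup>2), restrict (\<lambda>p. (\<Sum>q\<in>J0. (a q)\<^sup>2) powr (-1/2) * b p) J1)" for a b
    using assms(4) by (auto simp: norm_ratio_map_def merge_def restrict_def fun_eq_iff intro!: sum.cong)
  have \<Psi>_eq: "ennreal (c0 * indicator {0<..} r * r powr (card J0 / 2 - 1)) * \<Psi> r
      = \<integral>\<^sup>+t. ennreal (norm_ratio_density (card J0) (card J1) (r, t)) * G (r, t) \<partial>?P J1" for r
  proof (cases "r > 0")
    case True
    have density: "norm_ratio_density (card J0) (card J1) (r, t)
        = c0 * r powr (card J0 / 2 - 1) * r powr (card J1 / 2)" for t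
      using True by (simp add: norm_ratio_density_def c0_def powr_add[symmetric] add_divide_distrib
          algebra_simps)
    have \<Psi>_rescaled: "\<Psi> r = ennreal (r powr (card J1 / 2)) * \<integral>\<^sup>+t. G (r, t) \<partial>?P J1"
      unfolding \<Psi>_def using True by (intro nn_integral_PiM_lborel_rescale assms(2)) measurable
    have "c0 \<ge> 0"
      using assms(1,3) by (simp add: c0_def card_gt_0_iff)
    then show ?thesis
      using True unfolding \<Psi>_rescaled density by (simp add: nn_integral_cmult ennreal_mult' mult.assoc)
  qed (simp add: norm_ratio_density_def)
  have "(\<integral>\<^sup>+x. G (norm_ratio_map J0 J1 x) \<partial>?P (J0 \<union> J1))
      = \<integral>\<^sup>+a. \<Psi> (\<Sum>p\<in>J0. (a p)\<^sup>2) \<partial>?P J0"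
    using assms by (subst product_nn_integral_fold) (simp_all add: merge \<Psi>_def)
  also have "\<dots> = \<integral>\<^sup>+r. ennreal (c0 * indicator {0<..} r * r powr (card J0 / 2 - 1)) * \<Psi> r \<partial>lborel"
    using assms by (simp add: nn_integral_PiM_lborel_sum_squares c0_def)
  also have "\<dots> = \<integral>\<^sup>+r. \<integral>\<^sup>+t. ennreal (norm_ratio_density (card J0) (card J1) (r, t)) * G (r, t)
      \<partial>?P J1 \<partial>lborel"
    by (simp only: \<Psi>_eq)
  also have "\<dots> = \<integral>\<^sup>+z. ennreal (norm_ratio_density (card J0) (card J1) z) * G z \<partial>(lborel \<Otimes>\<^sub>M ?P J1)"
    by (intro J1.nn_integral_fst) measurable
  finally show ?thesis .
qed

lemma distr_PiM_lborel_norm_ratio: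
  fixes J0 J1 :: "'i set"
  assumes "finite J0" "finite J1" "J0 \<noteq> {}" "J0 \<inter> J1 = {}"
  shows "distr (PiM (J0 \<union> J1) (\<lambda>_. lborel)) (lborel \<Otimes>\<^sub>M PiM J1 (\<lambda>_. lborel)) (norm_ratio_map J0 J1)
       = density (lborel \<Otimes>\<^sub>M PiM J1 (\<lambda>_. lborel))
           (\<lambda>z. ennreal (norm_ratio_density (card J0) (card J1) z))"
    (is "distr ?P ?N ?T = density ?N ?w")
proof (rule measure_eqI)
  fix A assume "A \<in> sets (distr ?P ?N ?T)"
  then have A[measurable]: "A \<in> sets ?N"
    by simp
  have "emeasure (distr ?P ?N ?T) A = \<integral>\<^sup>+x. indicator A (?T x) \<partial>?P"
    using nn_integral_distr[of ?T ?P ?N "indicator A"] A by (simp add: nn_integral_indicator)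
  also have "\<dots> = \<integral>\<^sup>+z. ?w z * indicator A z \<partial>?N"
    using nn_integral_PiM_lborel_norm_ratio[OF assms, of "indicator A"] by simp
  also have "\<dots> = emeasure (density ?N ?w) A"
    using A by (rule emeasure_density[symmetric, rotated]) measurable
  finally show "emeasure (distr ?P ?N ?T) A = emeasure (density ?N ?w) A" .
qed simp

lemma AE_PiM_lborel_sum_squares_pos:
  fixes J0 J :: "'i set"
  assumes "finite J" "J0 \<subseteq> J" "J0 \<noteq> {}"
  shows "AE x in PiM J (\<lambda>_. lborel::real measure). 0 < (\<Sum>p\<in>J0. (x p)\<^sup>2)"
proof -
  define J1 where "J1 = J - J0"
  let ?N = "(lborel::real measure) \<Otimes>\<^sub>M PiM J1 (\<lambda>_. lborel::real measure)"
  have J: "J = J0 \<union> J1" and J0: "finite J0" and J1: "finite J1" "J0 \<inter> J1 = {}"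
    using assms(1,2) finite_subset unfolding J1_def by auto
  have distr_eq: "distr (PiM J (\<lambda>_. lborel)) ?N (norm_ratio_map J0 J1)
      = density ?N (\<lambda>z. ennreal (norm_ratio_density (card J0) (card J1) z))"
    unfolding J using J0 J1(1) assms(3) J1(2) by (rule distr_PiM_lborel_norm_ratio)
  have "AE z in distr (PiM J (\<lambda>_. lborel)) ?N (norm_ratio_map J0 J1). 0 < fst z"
    unfolding distr_eq by (subst AE_density) (auto intro!: AE_I2 simp: norm_ratio_density_def indicator_def)
  moreover have "{z \<in> space ?N. 0 < fst z} \<in> sets ?N"
    by measurable
  ultimately show ?thesis
    using assms(2) J by (subst (asm) AE_distr_iff) (simp_all add: norm_ratio_map_def)
qed

lemma distributed_comp_density:
  assumes X: "distributed M P X f"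
    and [measurable]: "T \<in> measurable P N" "w \<in> borel_measurable N" "g \<in> borel_measurable N"
    and T: "distr P N T = density N w"
    and f: "AE x in P. f x = g (T x)"
  shows "distributed M N (\<lambda>\<omega>. T (X \<omega>)) (\<lambda>z. w z * g z)"
proof -
  note [measurable] = distributed_measurable[OF X] distributed_borel_measurable[OF X]
  have "distr M N (\<lambda>\<omega>. T (X \<omega>)) = distr (distr M P X) N T"
    by (subst distr_distr) (auto simp: comp_def)
  also have "\<dots> = distr (density P (\<lambda>x. g (T x))) N T"
    using density_cong[of f P "\<lambda>x. g (T x)"] f by (simp add: distributed_distr_eq_density[OF X])
  also have "\<dots> = density N (\<lambda>z. w z * g z)"
    by (simp add: density_distr[symmetric] T density_density_eq)
  finally show ?thesis
    unfolding distributed_def by simp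
qed

section \<open>Block vectors\<close>

definition blk_form :: "(nat \<Rightarrow> real) \<Rightarrow> nat \<Rightarrow> (nat \<Rightarrow> nat) \<Rightarrow> (nat \<times> nat \<Rightarrow> real) \<Rightarrow> real" where
  "blk_form \<sigma> k n x = (\<Sum>i\<le>k. \<sigma> i powr (-2) * blk_sqnorm n x i)"

definition blk_ratio_form ::
    "(nat \<Rightarrow> real) \<Rightarrow> nat \<Rightarrow> (nat \<Rightarrow> nat) \<Rightarrow> real \<times> (nat \<times> nat \<Rightarrow> real) \<Rightarrow> real" where
  "blk_ratio_form \<sigma> k n z =
     \<sigma> 0 powr (-2) * (1 + \<sigma> 0 powr 2 * (\<Sum>i\<in>{1..k}. \<sigma> i powr (-2) * blk_sqnorm n (snd z) i)) * fst z"

lemma sum_atMost_split_0: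
  fixes f :: "nat \<Rightarrow> 'a::comm_monoid_add"
  shows "(\<Sum>i\<le>k. f i) = f 0 + (\<Sum>i\<in>{1..k}. f i)"
proof -
  have "{..k} = insert 0 {1..k}"
    by auto
  then show ?thesis
    by simp
qed

lemma blk_idx_eq_Un: "blk_idx k n = ({0} \<times> {..<n 0}) \<union> blk_idx1 k n"
  unfolding blk_idx_def blk_idx1_def by (auto simp: Suc_le_eq) (metis gr0I)

lemma blk_idx1_disjoint: "({0} \<times> {..<n 0}) \<inter> blk_idx1 k n = {}"
  unfolding blk_idx1_def by auto

lemma blk_idx1_eq_Sigma: "blk_idx1 k n = Sigma {1..k} (\<lambda>i. {..<n i})"
  unfolding blk_idx1_def by auto

lemma finite_blk_idx1: "finite (blk_idx1 k n)"
  by (simp add: blk_idx1_eq_Sigma)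

lemma card_blk_idx1: "card (blk_idx1 k n) = (\<Sum>i\<in>{1..k}. n i)"
  by (simp add: blk_idx1_eq_Sigma)

lemma finite_blk_idx: "finite (blk_idx k n)"
  by (simp add: blk_idx_eq_Un finite_blk_idx1)

lemma blk_sqnorm_nonneg: "blk_sqnorm n x i \<ge> 0"
  unfolding blk_sqnorm_def by (simp add: sum_nonneg)

lemma blk_sqnorm_eq_sum: "blk_sqnorm n x i = (\<Sum>p\<in>{i} \<times> {..<n i}. (x p)\<^sup>2)"
proof -
  have "{i} \<times> {..<n i} = Pair i ` {..<n i}"
    by auto
  then show ?thesis
    by (simp add: blk_sqnorm_def sum.reindex inj_on_def)
qed

lemma blk_sqnorm_restrict_scale:
  assumes "1 \<le> i" "i \<le> k"
  shows "blk_sqnorm n (restrict (\<lambda>p. c * x p) (blk_idx1 k n)) i = c\<^sup>2 * blk_sqnorm n x i"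
  unfolding blk_sqnorm_def sum_distrib_left using assms
  by (intro sum.cong) (auto simp: blk_idx1_def power_mult_distrib)

lemma blk_sqnorm_measurable:
  assumes "{i} \<times> {..<n i} \<subseteq> J"
  shows "(\<lambda>x. blk_sqnorm n x i) \<in> borel_measurable (PiM J (\<lambda>_. lborel))"
proof -
  have [measurable]: "(\<lambda>x. x p) \<in> borel_measurable (PiM J (\<lambda>_. lborel))" if "p \<in> {i} \<times> {..<n i}" for p
    using that assms measurable_component_singleton[of p J "\<lambda>_. lborel"] by auto
  show ?thesis
    unfolding blk_sqnorm_eq_sum by measurable
qed

lemma norm_ratio_map_blk:
  "norm_ratio_map ({0} \<times> {..<n 0}) (blk_idx1 k n) x
     = (blk_sqnorm n x 0, restrict (\<lambda>p. blk_sqnorm n x 0 powr (-1/2) * x p) (blk_idx1 k n))"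
  by (simp add: norm_ratio_map_def blk_sqnorm_eq_sum)

lemma distr_blk_norm_ratio:
  assumes "n 0 > 0"
  shows "distr (PiM (blk_idx k n) (\<lambda>_. lborel)) (lborel \<Otimes>\<^sub>M PiM (blk_idx1 k n) (\<lambda>_. lborel))
           (norm_ratio_map ({0} \<times> {..<n 0}) (blk_idx1 k n))
       = density (lborel \<Otimes>\<^sub>M PiM (blk_idx1 k n) (\<lambda>_. lborel))
           (\<lambda>z. ennreal (norm_ratio_density (n 0) (\<Sum>i\<in>{1..k}. n i) z))"
  using assms distr_PiM_lborel_norm_ratio[OF _ finite_blk_idx1[of k n] _ blk_idx1_disjoint[of n k]]
  by (simp add: blk_idx_eq_Un card_blk_idx1 card_cartesian_product lessThan_empty_iff)

lemma AE_blk_sqnorm_pos: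
  assumes "n 0 > 0"
  shows "AE x in PiM (blk_idx k n) (\<lambda>_. lborel). 0 < blk_sqnorm n x 0"
  using AE_PiM_lborel_sum_squares_pos[OF finite_blk_idx, of "{0} \<times> {..<n 0}"] assms
  by (simp add: blk_idx_eq_Un blk_sqnorm_eq_sum lessThan_empty_iff)

lemma blk_form_nonneg: "blk_form \<sigma> k n x \<ge> 0"
  unfolding blk_form_def by (simp add: sum_nonneg blk_sqnorm_nonneg)

lemma blk_ratio_form_nonneg: "fst z \<ge> 0 \<Longrightarrow> blk_ratio_form \<sigma> k n z \<ge> 0"
  unfolding blk_ratio_form_def
  by (intro mult_nonneg_nonneg add_nonneg_nonneg sum_nonneg blk_sqnorm_nonneg) auto

lemma blk_form_eq_ratio_form:
  assumes "\<sigma> 0 > 0" "blk_sqnorm n x 0 > 0"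
  shows "blk_form \<sigma> k n x = blk_ratio_form \<sigma> k n (norm_ratio_map ({0} \<times> {..<n 0}) (blk_idx1 k n) x)"
proof -
  define s where "s = blk_sqnorm n x 0"
  define B where "B = (\<Sum>i\<in>{1..k}. \<sigma> i powr (-2) * blk_sqnorm n x i)"
  have "(s powr (-1/2))\<^sup>2 = 1 / s"
    using assms(2) by (simp add: s_def power2_eq_square powr_add[symmetric] powr_minus_divide)
  then have "(\<Sum>i\<in>{1..k}. \<sigma> i powr (-2)
      * blk_sqnorm n (restrict (\<lambda>p. s powr (-1/2) * x p) (blk_idx1 k n)) i) = B / s"
    by (simp add: B_def blk_sqnorm_restrict_scale sum_divide_distrib)
  moreover have "blk_form \<sigma> k n x = \<sigma> 0 powr (-2) * s + B"
    by (simp add: blk_form_def B_def s_def sum_atMost_split_0)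
  moreover have "\<sigma> 0 powr (-2) * \<sigma> 0 powr 2 = 1"
    using assms(1) by (simp add: powr_minus)
  ultimately show ?thesis
    using assms(2) unfolding norm_ratio_map_blk blk_ratio_form_def s_def[symmetric]
    by (simp add: field_simps) (simp add: mult.assoc[symmetric])
qed

lemma blk_ratio_form_measurable:
  "blk_ratio_form \<sigma> k n \<in> borel_measurable (lborel \<Otimes>\<^sub>M PiM (blk_idx1 k n) (\<lambda>_. lborel))"
proof -
  have "(\<lambda>t. blk_sqnorm n t i) \<in> borel_measurable (PiM (blk_idx1 k n) (\<lambda>_. lborel))" if "i \<in> {1..k}" for i
    using that by (intro blk_sqnorm_measurable) (auto simp: blk_idx1_def)
  then show ?thesis
    unfolding blk_ratio_form_def
    by (intro borel_measurable_times borel_measurable_add borel_measurable_sum measurable_const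
        measurable_fst'' measurable_snd'' measurable_compose[OF measurable_snd]) auto
qed

text \<open>
  The generator h is not assumed measurable. On [0, oo) measurability is forced by that of
  the density, since the quadratic form runs through every value u \<ge> 0 along a measurable
  curve.
\<close>

lemma blk_form_profile_measurable:
  fixes F :: "real \<Rightarrow> ennreal"
  assumes F: "(\<lambda>x. F (blk_form \<sigma> k n x)) \<in> borel_measurable (PiM (blk_idx k n) (\<lambda>_. lborel))"
    and "n 0 > 0" "\<sigma> 0 > 0"
  obtains E where "E \<in> borel_measurable borel" "\<forall>u\<ge>0. E u = F u"
proof -
  define e where "e u = restrict (\<lambda>p. if p = (0, 0) then \<sigma> 0 * sqrt u else 0) (blk_idx k n)" for u
  have "e \<in> measurable borel (PiM (blk_idx k n) (\<lambda>_. lborel))"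
    unfolding e_def by (intro measurable_restrict) auto
  have blk_e: "blk_sqnorm n (e u) i = (if i = 0 then (\<sigma> 0 * sqrt u)\<^sup>2 else 0)" if "i \<le> k" for i u
    using that assms(2)
    by (auto simp: blk_sqnorm_def e_def blk_idx_def if_distrib[of "\<lambda>y. y\<^sup>2"] cong: if_cong)
  have form_e: "blk_form \<sigma> k n (e u) = u" if "u \<ge> 0" for u
  proof -
    have "blk_form \<sigma> k n (e u) = \<sigma> 0 powr (-2) * (\<sigma> 0 * sqrt u)\<^sup>2"
      by (simp add: blk_form_def blk_e if_distrib[of "(*) _"] cong: if_cong)
    also have "\<dots> = u"
      using that assms(3) by (simp add: power_mult_distrib powr_minus field_simps)
    finally show ?thesis .
  qed
  show ?thesis
  proof (rule that)
    show "(\<lambda>u. F (blk_form \<sigma> k n (e u))) \<in> borel_measurable borel"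
      using measurable_comp[OF \<open>e \<in> _\<close> F] by (simp add: comp_def)
  qed (simp add: form_e)
qed

lemma distributed_blk_norm_ratio:
  fixes E :: "real \<Rightarrow> ennreal"
  assumes "n 0 > 0" "\<sigma> 0 > 0" "E \<in> borel_measurable borel"
    and X: "distributed M (PiM (blk_idx k n) (\<lambda>_. lborel)) X (\<lambda>x. E (blk_form \<sigma> k n x))"
  shows "distributed M (lborel \<Otimes>\<^sub>M PiM (blk_idx1 k n) (\<lambda>_. lborel))
      (\<lambda>\<omega>. norm_ratio_map ({0} \<times> {..<n 0}) (blk_idx1 k n) (X \<omega>))
      (\<lambda>z. ennreal (norm_ratio_density (n 0) (\<Sum>i\<in>{1..k}. n i) z) * E (blk_ratio_form \<sigma> k n z))"
proof (rule distributed_comp_density[OF X])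
  show "norm_ratio_map ({0} \<times> {..<n 0}) (blk_idx1 k n)
      \<in> measurable (PiM (blk_idx k n) (\<lambda>_. lborel)) (lborel \<Otimes>\<^sub>M PiM (blk_idx1 k n) (\<lambda>_. lborel))"
    by (intro norm_ratio_map_measurable) (auto simp: blk_idx_eq_Un)
  show "(\<lambda>z. E (blk_ratio_form \<sigma> k n z)) \<in> borel_measurable (lborel \<Otimes>\<^sub>M PiM (blk_idx1 k n) (\<lambda>_. lborel))"
    using measurable_comp[OF blk_ratio_form_measurable assms(3)] by (simp add: comp_def)
  show "AE x in PiM (blk_idx k n) (\<lambda>_. lborel).
      E (blk_form \<sigma> k n x) = E (blk_ratio_form \<sigma> k n (norm_ratio_map ({0} \<times> {..<n 0}) (blk_idx1 k n) x))"
    using AE_blk_sqnorm_pos[where k=k and n=n, OF assms(1)]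
    by eventually_elim (simp add: blk_form_eq_ratio_form[where \<sigma>=\<sigma>, OF assms(2)])
qed (simp_all add: distr_blk_norm_ratio[where n=n and k=k, OF assms(1)])

lemma norm_ratio_density_blk_profile:
  fixes k :: nat and n :: "nat \<Rightarrow> nat" and \<sigma> :: "nat \<Rightarrow> real" and E :: "real \<Rightarrow> ennreal"
  assumes "n 0 > 0" and E: "\<forall>u\<ge>0. E u = ennreal ((\<Prod>i\<le>k. \<sigma> i powr (- real (n i))) * h u)"
  shows "ennreal (norm_ratio_density (n 0) (\<Sum>i\<in>{1..k}. n i) z) * E (blk_ratio_form \<sigma> k n z)
    = ennreal (indicator {0<..} (fst z) * (pi powr (real (n 0) / 2)
        / (Gamma (real (n 0) / 2) * (\<Prod>i\<le>k. \<sigma> i powr real (n i)))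
      * fst z powr (real (\<Sum>i\<le>k. n i) / 2 - 1) * h (blk_ratio_form \<sigma> k n z)))"
proof (cases "fst z > 0")
  case True
  have "(\<Prod>i\<le>k. \<sigma> i powr (- real (n i))) = 1 / (\<Prod>i\<le>k. \<sigma> i powr real (n i))"
    by (simp add: powr_minus prod_inversef[symmetric] divide_inverse)
  moreover have "(\<Sum>i\<le>k. n i) = n 0 + (\<Sum>i\<in>{1..k}. n i)"
    by (rule sum_atMost_split_0)
  ultimately have "norm_ratio_density (n 0) (\<Sum>i\<in>{1..k}. n i) z
      * ((\<Prod>i\<le>k. \<sigma> i powr (- real (n i))) * h (blk_ratio_form \<sigma> k n z))
    = indicator {0<..} (fst z) * (pi powr (real (n 0) / 2)
        / (Gamma (real (n 0) / 2) * (\<Prod>i\<le>k. \<sigma> i powr real (n i)))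
      * fst z powr (real (\<Sum>i\<le>k. n i) / 2 - 1) * h (blk_ratio_form \<sigma> k n z))"
    by (simp add: norm_ratio_density_def add_divide_distrib)
  moreover have "norm_ratio_density (n 0) (\<Sum>i\<in>{1..k}. n i) z \<ge> 0"
    using assms(1) by (simp add: norm_ratio_density_def)
  ultimately show ?thesis
    using True E by (simp only: blk_ratio_form_nonneg ennreal_mult'[symmetric] less_imp_le simp_thms)
qed (simp add: norm_ratio_density_def)

theorem mainTheorem2:
  fixes k :: nat and n :: "nat \<Rightarrow> nat" and \<sigma> :: "nat \<Rightarrow> real" and h :: "real \<Rightarrow> real"
    and M :: "'a measure" and X :: "'a \<Rightarrow> (nat \<times> nat \<Rightarrow> real)"
  assumes "k \<ge> 1"
    and "\<forall>i\<le>k. n i > 0"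
    and "\<forall>i\<le>k. \<sigma> i > 0"
    and "\<forall>r\<ge>0. h r \<ge> 0"
    and "prob_space M"
    and "distributed M (PiM (blk_idx k n) (\<lambda>_. lborel)) X
           (\<lambda>x. ennreal ((\<Prod>i\<le>k. \<sigma> i powr (- real (n i)))
                 * h (\<Sum>i\<le>k. \<sigma> i powr (-2) * blk_sqnorm n x i)))"
  shows "distributed M (lborel \<Otimes>\<^sub>M PiM (blk_idx1 k n) (\<lambda>_. lborel))
           (\<lambda>\<omega>. (blk_sqnorm n (X \<omega>) 0,
                  restrict (\<lambda>p. blk_sqnorm n (X \<omega>) 0 powr (-1/2) * X \<omega> p) (blk_idx1 k n)))
           (\<lambda>(s, t). ennreal (indicator {0<..} s *
              (pi powr (real (n 0) / 2) / (Gamma (real (n 0) / 2) * (\<Prod>i\<le>k. \<sigma> i powr real (n i)))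
               * s powr (real (\<Sum>i\<le>k. n i) / 2 - 1)
               * h (\<sigma> 0 powr (-2) * (1 + \<sigma> 0 powr 2 * (\<Sum>i\<in>{1..k}. \<sigma> i powr (-2) * blk_sqnorm n t i)) * s))))"
proof -
  have n0: "n 0 > 0" and \<sigma>0: "\<sigma> 0 > 0"
    using assms(2,3) by auto
  define C where "C = (\<Prod>i\<le>k. \<sigma> i powr (- real (n i)))"
  have "(\<lambda>x. ennreal (C * h (blk_form \<sigma> k n x))) \<in> borel_measurable (PiM (blk_idx k n) (\<lambda>_. lborel))"
    using distributed_borel_measurable[OF assms(6)] unfolding C_def blk_form_def .
  then obtain E where E: "E \<in> borel_measurable borel" "\<forall>u\<ge>0. E u = ennreal (C * h u)"
    by (rule blk_form_profile_measurable[where F="\<lambda>u. ennreal (C * h u)" and n=n and \<sigma>=\<sigma>, OF _ n0 \<sigma>0])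
      blast
  have "E (blk_form \<sigma> k n x) = ennreal (C * h (blk_form \<sigma> k n x))" for x
    using E(2) blk_form_nonneg by blast
  then have "distributed M (PiM (blk_idx k n) (\<lambda>_. lborel)) X (\<lambda>x. E (blk_form \<sigma> k n x))"
    unfolding C_def blk_form_def using assms(6) by simp
  note transformed = distributed_blk_norm_ratio[OF n0 \<sigma>0 E(1) this]
  show ?thesis
    using transformed[unfolded norm_ratio_density_blk_profile[OF n0 E(2)[unfolded C_def]]]
    unfolding norm_ratio_map_blk blk_ratio_form_def case_prod_beta .
qed

end
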